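(* Let $0\le\lambda<\gamma\le\delta$. If $F\in\mathcal{R}(\gamma,\delta,\lambda)$, then $\mathrm{Re}\{F'(z)\}>0$ for all $z\in\mathcal{U}$, and hence $F$ is close-to-convex in $\mathcal{U}$.
   Context: Let $\mathcal{U}=\{z\in\mathbb{C}:|z|<1\}$ and let $\mathcal{A}$ be the class of analytic functions $F$ in $\mathcal{U}$ with $F(0)=0$, $F'(0)=1$. For real $0\le\lambda<\gamma\le\delta$, $\mathcal{R}(\gamma,\delta,\lambda)$ is the class of $F\in\mathcal{A}$ such that $\mathrm{Re}\{\gamma F'(z)+\delta zF''(z)+\frac{\delta-\gamma}{2}z^2F'''(z)\}>\lambda$ for all $z\in\mathcal{U}$. A function is close-to-convex in $\mathcal{U}$ if it is univalent there and maps $\mathcal{U}$ onto a close-to-convex domain, i.e. a simply connected domain whose complement in $\mathbb{C}$ is a union of non-crossing half-lines. *)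

theory Defs
  imports "HOL-Complex_Analysis.Complex_Analysis"
begin

definition class_A :: "(complex \<Rightarrow> complex) \<Rightarrow> bool" where
  "class_A F \<longleftrightarrow> F holomorphic_on ball 0 1 \<and> F 0 = 0 \<and> deriv F 0 = 1"

definition class_R :: "real \<Rightarrow> real \<Rightarrow> real \<Rightarrow> (complex \<Rightarrow> complex) \<Rightarrow> bool" where
  "class_R gam del lam F \<longleftrightarrow> class_A F \<and>
     (\<forall>z\<in>ball 0 1. Re (of_real gam * deriv F z + of_real del * z * (deriv ^^ 2) F z
        + of_real ((del - gam) / 2) * z\<^sup>2 * (deriv ^^ 3) F z) > lam)"

definition half_line :: "complex set \<Rightarrow> bool" where
  "half_line h \<longleftrightarrow> (\<exists>a v. v \<noteq> 0 \<and> h = {a + of_real t * v | t. t \<ge> 0})"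

definition half_line_origin :: "complex set \<Rightarrow> complex" where
  "half_line_origin h = (SOME a. \<exists>v. v \<noteq> 0 \<and> h = {a + of_real t * v | t. t \<ge> 0})"

definition non_crossing :: "complex set \<Rightarrow> complex set \<Rightarrow> bool" where
  "non_crossing h1 h2 \<longleftrightarrow> h1 \<subseteq> h2 \<or> h2 \<subseteq> h1 \<or>
     h1 \<inter> h2 \<subseteq> {half_line_origin h1, half_line_origin h2}"

definition close_to_convex_domain :: "complex set \<Rightarrow> bool" where
  "close_to_convex_domain D \<longleftrightarrow> open D \<and> connected D \<and> simply_connected D \<and>
     (\<exists>H. (\<forall>h\<in>H. half_line h) \<and> (- D = \<Union>H) \<and>
          (\<forall>h1\<in>H. \<forall>h2\<in>H. h1 \<noteq> h2 \<longrightarrow> non_crossing h1 h2))"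

definition close_to_convex :: "(complex \<Rightarrow> complex) \<Rightarrow> bool" where
  "close_to_convex F \<longleftrightarrow> inj_on F (ball 0 1) \<and> close_to_convex_domain (F ` ball 0 1)"

end

theory Submission
  imports Defs
begin

(* Write p = F' and G = p + z p' = (z p)'. The defining expression of the class equals
   gam G + mu z G' with mu = (del - gam)/2 >= 0. Whenever Re (alpha g + beta z g') > 0 on the
   disc, the real function t |-> t powr (alpha/beta) Re g(t z) vanishes at 0 and is strictly
   increasing on [0,1], so Re g > 0; applied to G and then to p this gives Re F' > 0.

   Then Re ((F a - F b) cnj (a - b)) > 0 for a ~= b, i.e. F is a strictly monotone map of the
   disc, in particular injective. For w outside the image, variational inequalities on the discs
   of radius r < 1 (solved by Brouwer's theorem) have solutions accumulating at a point zeta of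
   the unit circle with Re ((w - F z) cnj (zeta - z)) >= 0 for all z in the disc. For fixed zeta
   these w form a set containing w + t zeta for t >= 0 and missing the image, and the sets for
   distinct zeta are disjoint; so the complement of the image is a union of non-crossing
   half-lines. *)

lemma Re_pos_if_Re_Euler_combination_pos:
  fixes g :: "complex \<Rightarrow> complex" and \<alpha> \<beta> :: real
  assumes hol: "g holomorphic_on ball 0 1" and "\<alpha> > 0" "\<beta> \<ge> 0"
    and pos: "\<And>w. w \<in> ball 0 1 \<Longrightarrow> Re (of_real \<alpha> * g w + of_real \<beta> * w * deriv g w) > 0"
    and z: "z \<in> ball 0 1"
  shows "Re (g z) > 0"
proof (cases "\<beta> = 0")
  case True
  then show ?thesis using pos[OF z] \<open>\<alpha> > 0\<close> by (simp add: zero_less_mult_iff)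
next
  case False
  with \<open>\<beta> \<ge> 0\<close> have "\<beta> > 0" by simp
  define c where "c = \<alpha> / \<beta>"
  have "c > 0" unfolding c_def using \<open>\<alpha> > 0\<close> \<open>\<beta> > 0\<close> by simp
  define h where "h t = t powr c * Re (g (of_real t * z))" for t :: real
  have in_ball: "of_real t * z \<in> ball 0 1" if "0 \<le> t" "t \<le> 1" for t
    using z that mult_left_le_one_le[of "norm z" t] by (simp add: norm_mult)
  have "continuous_on {0..1} (\<lambda>t. g (of_real t * z))"
    using in_ball by (intro continuous_on_compose2[OF holomorphic_on_imp_continuous_on[OF hol]])
      (auto intro!: continuous_intros)
  then have cont_h: "continuous_on {0..1} h"
    unfolding h_def using \<open>c > 0\<close> by (intro continuous_intros continuous_on_powr') auto
  have deriv_pos: "\<exists>D. (h has_real_derivative D) (at t) \<and> D > 0" if "0 < t" "t < 1" for t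
  proof -
    define u where "u = of_real t * z"
    have u: "u \<in> ball 0 1" unfolding u_def using in_ball that by simp
    have "(g has_field_derivative deriv g u) (at (of_real t * z))"
      using holomorphic_derivI[OF hol open_ball u] unfolding u_def .
    then have "((\<lambda>s. g (s * z)) has_field_derivative deriv g u * z) (at (of_real t))"
      by (rule DERIV_chain2[where g="\<lambda>s. s * z"]) (auto intro!: derivative_eq_intros)
    then have "((\<lambda>s. Re (g (of_real s * z))) has_real_derivative Re (deriv g u * z)) (at t)"
      by (intro has_field_derivative_Re has_vector_derivative_real_field)
    from DERIV_mult[OF has_real_derivative_powr[OF \<open>0 < t\<close>, of c] this]
    have "(h has_real_derivative c * t powr (c - 1) * Re (g u) + Re (deriv g u * z) * t powr c) (at t)"
      unfolding h_def u_def .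
    moreover have "c * t powr (c - 1) * Re (g u) + Re (deriv g u * z) * t powr c
        = t powr (c - 1) / \<beta> * Re (of_real \<alpha> * g u + of_real \<beta> * u * deriv g u)"
    proof -
      have "t powr c = t powr (c - 1) * t" using \<open>0 < t\<close> by (simp add: powr_diff)
      moreover have "Re (of_real \<alpha> * g u + of_real \<beta> * u * deriv g u)
          = \<alpha> * Re (g u) + \<beta> * t * Re (deriv g u * z)"
        by (simp add: u_def) (simp add: algebra_simps)
      moreover have "c * P * A + B * (P * t) = P / \<beta> * (\<alpha> * A + \<beta> * t * B)" for A B P
        using \<open>\<beta> > 0\<close> by (simp add: c_def field_simps)
      ultimately show ?thesis by metis
    qed
    moreover have "t powr (c - 1) / \<beta> * Re (of_real \<alpha> * g u + of_real \<beta> * u * deriv g u) > 0"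
      using pos[OF u] \<open>0 < t\<close> \<open>\<beta> > 0\<close> by simp
    ultimately show ?thesis by auto
  qed
  have "h 0 < h 1"
    using DERIV_pos_imp_increasing_open[OF zero_less_one deriv_pos cont_h] by blast
  then show ?thesis unfolding h_def by simp
qed

definition strictly_monotone_on :: "'a::real_inner set \<Rightarrow> ('a \<Rightarrow> 'a) \<Rightarrow> bool" where
  "strictly_monotone_on S F \<longleftrightarrow> (\<forall>a\<in>S. \<forall>b\<in>S. a \<noteq> b \<longrightarrow> inner (F a - F b) (a - b) > 0)"

lemma strictly_monotone_on_imp_inj_on: "strictly_monotone_on S F \<Longrightarrow> inj_on F S"
  unfolding strictly_monotone_on_def inj_on_def by force

lemma strictly_monotone_on_imp_monotone:
  "strictly_monotone_on S F \<Longrightarrow> a \<in> S \<Longrightarrow> b \<in> S \<Longrightarrow> inner (F a - F b) (a - b) \<ge> 0"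
  unfolding strictly_monotone_on_def by (cases "a = b") (auto intro!: less_imp_le)

lemma strictly_monotone_on_if_Re_deriv_pos:
  assumes hol: "F holomorphic_on S" and "open S" "convex S"
    and pos: "\<And>z. z \<in> S \<Longrightarrow> Re (deriv F z) > 0"
  shows "strictly_monotone_on S F"
  unfolding strictly_monotone_on_def
proof (intro ballI impI)
  fix a b assume "a \<in> S" "b \<in> S" "a \<noteq> b"
  then have seg: "closed_segment b a \<subseteq> S"
    using \<open>convex S\<close> by (simp add: closed_segment_subset)
  define f where "f u = F u * cnj (a - b)" for u
  have deriv_f: "(f has_field_derivative deriv F u * cnj (a - b)) (at u)"
    if "u \<in> closed_segment b a" for u
    unfolding f_def using that seg hol \<open>open S\<close>
    by (intro DERIV_cmult_right holomorphic_derivI[of F S]) auto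
  obtain u where u: "u \<in> closed_segment b a"
    and mvt: "Re (f a) - Re (f b) = Re (deriv F u * cnj (a - b) * (a - b))"
    using complex_mvt_line[OF deriv_f] by blast
  have "cnj (a - b) * (a - b) = of_real ((cmod (a - b))\<^sup>2)"
    by (metis complex_norm_square mult.commute)
  then have "Re (deriv F u * cnj (a - b) * (a - b)) = Re (deriv F u * of_real ((cmod (a - b))\<^sup>2))"
    by (simp only: mult.assoc)
  also have "\<dots> = Re (deriv F u) * (cmod (a - b))\<^sup>2"
    by simp
  finally have "Re (deriv F u * cnj (a - b) * (a - b)) = Re (deriv F u) * (cmod (a - b))\<^sup>2" .
  moreover have "Re (deriv F u) > 0" using pos u seg by blast
  moreover have "inner (F a - F b) (a - b) = Re (f a) - Re (f b)"
    unfolding f_def by (simp add: inner_complex_def algebra_simps)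
  ultimately show "inner (F a - F b) (a - b) > 0"
    using mvt \<open>a \<noteq> b\<close> by simp
qed

lemma variational_inequality_solution:
  fixes f :: "'a::euclidean_space \<Rightarrow> 'a"
  assumes K: "compact K" "convex K" "K \<noteq> {}" and "continuous_on K f"
  obtains y where "y \<in> K" "\<And>x. x \<in> K \<Longrightarrow> inner (f y) (x - y) \<ge> 0"
proof -
  define \<phi> where "\<phi> y = closest_point K (y - f y)" for y
  have "continuous_on K \<phi>"
    unfolding \<phi>_def using K \<open>continuous_on K f\<close>
    by (intro continuous_on_compose2[OF continuous_on_closest_point[of K UNIV]])
      (auto intro!: continuous_intros compact_imp_closed)
  moreover have "\<phi> \<in> K \<rightarrow> K"
    unfolding \<phi>_def using K by (auto intro!: closest_point_in_set compact_imp_closed)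
  ultimately obtain y where "y \<in> K" "\<phi> y = y"
    using brouwer[OF K] by blast
  moreover have "inner (f y) (x - y) \<ge> 0" if "x \<in> K" for x
    using closest_point_dot[of K x "y - f y"] K that \<open>\<phi> y = y\<close>
    by (auto simp: \<phi>_def compact_imp_closed inner_minus_left)
  ultimately show ?thesis using that by blast
qed

definition ray :: "complex \<Rightarrow> complex \<Rightarrow> complex set" where
  "ray a v = {a + of_real t * v | t. t \<ge> 0}"

lemma half_line_ray: "v \<noteq> 0 \<Longrightarrow> half_line (ray a v)"
  unfolding half_line_def ray_def by blast

lemma start_mem_ray: "a \<in> ray a v"
  unfolding ray_def by (auto intro!: exI[of _ 0])

lemma ray_subset_ray: "b \<in> ray a v \<Longrightarrow> ray b v \<subseteq> ray a v"
proof
  fix x assume "b \<in> ray a v" "x \<in> ray b v"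
  then obtain s t where "s \<ge> 0" "b = a + of_real s * v" "t \<ge> 0" "x = b + of_real t * v"
    unfolding ray_def by blast
  then have "x = a + of_real (s + t) * v" "s + t \<ge> 0" by (simp_all add: algebra_simps)
  then show "x \<in> ray a v" unfolding ray_def by blast
qed

lemma rays_nested_or_disjoint:
  "ray a v \<subseteq> ray b v \<or> ray b v \<subseteq> ray a v \<or> ray a v \<inter> ray b v = {}"
proof (cases "ray a v \<inter> ray b v = {}")
  case False
  then obtain s t where st: "s \<ge> 0" "t \<ge> 0" "a + of_real s * v = b + of_real t * v"
    unfolding ray_def by auto
  show ?thesis
  proof (cases "s \<le> t")
    case True
    with st have "a \<in> ray b v"
      unfolding ray_def by (auto intro!: exI[of _ "t - s"] simp: algebra_simps)
    then show ?thesis using ray_subset_ray by blast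
  next
    case False
    with st have "b \<in> ray a v"
      unfolding ray_def by (auto intro!: exI[of _ "s - t"] simp: algebra_simps)
    then show ?thesis using ray_subset_ray by blast
  qed
qed simp

lemma midpoint_in_ball:
  fixes a b :: "'a::euclidean_space"
  assumes "norm a \<le> 1" "norm b \<le> 1" "a \<noteq> b"
  shows "midpoint a b \<in> ball 0 1"
proof -
  have "midpoint a b \<in> open_segment a b" using assms(3) by simp
  then have "dist 0 (midpoint a b) < dist 0 a \<or> dist 0 (midpoint a b) < dist 0 b"
    by (rule dist_decreases_open_segment)
  then show ?thesis using assms(1,2) by auto
qed

(* The values that F could take at \<zeta> without violating monotonicity. *)
definition monotone_values :: "(complex \<Rightarrow> complex) \<Rightarrow> complex \<Rightarrow> complex set" where
  "monotone_values F \<zeta> = {v. \<forall>z\<in>ball 0 1. inner (v - F z) (\<zeta> - z) \<ge> 0}"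

lemma monotone_values_midpoint:
  assumes "v \<in> monotone_values F a" "v \<in> monotone_values F b"
  shows "v \<in> monotone_values F (midpoint a b)"
  unfolding monotone_values_def
proof (intro CollectI ballI)
  fix z :: complex assume "z \<in> ball 0 1"
  then have "inner (v - F z) (a - z) \<ge> 0" "inner (v - F z) (b - z) \<ge> 0"
    using assms unfolding monotone_values_def by blast+
  moreover have "inner (v - F z) (midpoint a b - z) = (inner (v - F z) (a - z) + inner (v - F z) (b - z)) / 2"
    by (simp add: midpoint_def inner_diff_right inner_add_right algebra_simps)
  ultimately show "inner (v - F z) (midpoint a b - z) \<ge> 0"
    by simp
qed

lemma ray_subset_monotone_values:
  assumes "cmod \<zeta> = 1" "v \<in> monotone_values F \<zeta>"
  shows "ray v \<zeta> \<subseteq> monotone_values F \<zeta>"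
proof
  fix x assume "x \<in> ray v \<zeta>"
  then obtain t where "t \<ge> 0" and x: "x = v + t *\<^sub>R \<zeta>"
    unfolding ray_def by (auto simp: scaleR_conv_of_real)
  have "inner (x - F z) (\<zeta> - z) \<ge> 0" if z: "z \<in> ball 0 1" for z
  proof -
    have "inner \<zeta> z \<le> norm \<zeta> * norm z" by (rule norm_cauchy_schwarz)
    with z assms(1) have "inner \<zeta> (\<zeta> - z) \<ge> 0"
      by (simp add: inner_diff_right dot_square_norm)
    moreover have "inner (v - F z) (\<zeta> - z) \<ge> 0"
      using assms(2) z unfolding monotone_values_def by blast
    moreover have "inner (x - F z) (\<zeta> - z) = inner (v - F z) (\<zeta> - z) + t * inner \<zeta> (\<zeta> - z)"
      by (simp add: x algebra_simps inner_add_left)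
    ultimately show ?thesis using \<open>t \<ge> 0\<close> by simp
  qed
  then show "x \<in> monotone_values F \<zeta>" unfolding monotone_values_def by blast
qed

lemma monotone_values_interior:
  assumes "continuous_on (ball 0 1) F" "z\<^sub>0 \<in> ball 0 1" "v \<in> monotone_values F z\<^sub>0"
  shows "v = F z\<^sub>0"
proof -
  define d where "d = v - F z\<^sub>0"
  have lim: "((\<lambda>s. z\<^sub>0 + s *\<^sub>R d) \<longlongrightarrow> z\<^sub>0) (at_right 0)"
    by (auto intro!: tendsto_eq_intros)
  have "isCont F z\<^sub>0"
    using assms(1,2) by (simp add: continuous_on_eq_continuous_at)
  then have "((\<lambda>s. inner (v - F (z\<^sub>0 + s *\<^sub>R d)) d) \<longlongrightarrow> inner (v - F z\<^sub>0) d) (at_right 0)"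
    by (intro tendsto_intros isCont_tendsto_compose[OF _ lim])
  moreover have "\<forall>\<^sub>F s in at_right 0. inner (v - F (z\<^sub>0 + s *\<^sub>R d)) d \<le> 0"
    using topological_tendstoD[OF lim open_ball assms(2)] eventually_at_right_less
  proof eventually_elim
    case (elim s)
    then have "inner (v - F (z\<^sub>0 + s *\<^sub>R d)) (z\<^sub>0 - (z\<^sub>0 + s *\<^sub>R d)) \<ge> 0"
      using assms(3) unfolding monotone_values_def by blast
    then show ?case using \<open>s > 0\<close> by (simp add: mult_le_0_iff)
  qed
  ultimately have "inner d d \<le> 0"
    unfolding d_def by (rule tendsto_upperbound) simp
  then have "d = 0" by (metis inner_eq_zero_iff inner_ge_zero order_antisym)
  then show ?thesis unfolding d_def by simp
qed

lemma monotone_values_boundary_disjoint_image: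
  assumes "strictly_monotone_on (ball 0 1) F" "cmod \<zeta> = 1" "v \<in> monotone_values F \<zeta>"
  shows "v \<notin> F ` ball 0 1"
proof
  assume "v \<in> F ` ball 0 1"
  then obtain z where z: "z \<in> ball 0 1" "v = F z" by blast
  define m where "m = midpoint z \<zeta>"
  have "z \<noteq> \<zeta>" using z assms(2) by auto
  then have m: "m \<in> ball 0 1" "m \<noteq> z"
    unfolding m_def using z assms(2) midpoint_in_ball[of z \<zeta>] by auto
  have "\<zeta> - m = (1/2) *\<^sub>R (\<zeta> - z)" "m - z = (1/2) *\<^sub>R (\<zeta> - z)"
    unfolding m_def by (simp_all add: midpoint_def scaleR_conv_of_real field_simps)
  moreover have "inner (F m - F z) (m - z) > 0"
    using assms(1) m z unfolding strictly_monotone_on_def by blast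
  moreover have "inner (v - F m) (\<zeta> - m) \<ge> 0"
    using assms(3) m unfolding monotone_values_def by blast
  ultimately show False
    using z(2) by (simp add: inner_diff_left)
qed

definition boundary_rays :: "(complex \<Rightarrow> complex) \<Rightarrow> complex set set" where
  "boundary_rays F = {ray v \<zeta> | v \<zeta>. cmod \<zeta> = 1 \<and> v \<in> monotone_values F \<zeta>}"

lemma half_line_if_boundary_ray: "h \<in> boundary_rays F \<Longrightarrow> half_line h"
  unfolding boundary_rays_def by (auto intro!: half_line_ray)

context
  fixes F :: "complex \<Rightarrow> complex"
  assumes cont: "continuous_on (ball 0 1) F"
    and mono: "strictly_monotone_on (ball 0 1) F"
begin

lemma monotone_values_boundary_disjoint:
  assumes "cmod \<zeta>\<^sub>1 = 1" "cmod \<zeta>\<^sub>2 = 1" "\<zeta>\<^sub>1 \<noteq> \<zeta>\<^sub>2"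
  shows "monotone_values F \<zeta>\<^sub>1 \<inter> monotone_values F \<zeta>\<^sub>2 = {}"
proof (intro equals0I)
  fix v assume v: "v \<in> monotone_values F \<zeta>\<^sub>1 \<inter> monotone_values F \<zeta>\<^sub>2"
  define m where "m = midpoint \<zeta>\<^sub>1 \<zeta>\<^sub>2"
  have "m \<in> ball 0 1" unfolding m_def using assms by (intro midpoint_in_ball) auto
  moreover have "v \<in> monotone_values F m"
    unfolding m_def using v by (intro monotone_values_midpoint) auto
  ultimately have "v = F m" by (rule monotone_values_interior[OF cont])
  with \<open>m \<in> ball 0 1\<close> have "v \<in> F ` ball 0 1" by blast
  then show False
    using monotone_values_boundary_disjoint_image[OF mono assms(1)] v by blast
qed

(* Minty's trick: monotonicity of F turns inner (F y - w) (z - y) >= 0 into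
   inner (F z - w) (z - y) >= 0. *)
lemma minty_solution_cball:
  assumes "0 \<le> r" "r < 1"
  obtains y where "y \<in> cball 0 r" "\<And>z. z \<in> cball 0 r \<Longrightarrow> inner (w - F z) (y - z) \<ge> 0"
proof -
  have sub: "cball 0 r \<subseteq> ball 0 1" using assms by auto
  then have "continuous_on (cball 0 r) (\<lambda>z. F z - w)"
    using cont by (auto intro!: continuous_intros intro: continuous_on_subset)
  then obtain y where y: "y \<in> cball 0 r" "\<And>x. x \<in> cball 0 r \<Longrightarrow> inner (F y - w) (x - y) \<ge> 0"
    using variational_inequality_solution[of "cball 0 r"] assms by auto
  have "inner (w - F z) (y - z) \<ge> 0" if z: "z \<in> cball 0 r" for z
  proof -
    have "inner (w - F z) (y - z) = inner (F z - F y) (z - y) + inner (F y - w) (z - y)"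
      by (simp add: inner_diff_left inner_diff_right inner_commute)
    moreover have "inner (F z - F y) (z - y) \<ge> 0"
      using strictly_monotone_on_imp_monotone[OF mono] y(1) z sub by blast
    ultimately show ?thesis using y(2)[OF z] by simp
  qed
  with y(1) show thesis by (rule that)
qed

lemma mem_monotone_values_cballE:
  obtains \<zeta> where "\<zeta> \<in> cball 0 1" "w \<in> monotone_values F \<zeta>"
proof -
  define r where "r n = 1 - inverse (real (Suc n))" for n
  have r: "0 \<le> r n" "r n < 1" for n
    unfolding r_def by (simp_all add: inverse_le_1_iff)
  have "r \<longlonglongrightarrow> 1"
    unfolding r_def using LIMSEQ_inverse_real_of_nat_add_minus[of 1] by simp
  have "\<forall>n. \<exists>y. y \<in> cball 0 (r n) \<and> (\<forall>z\<in>cball 0 (r n). inner (w - F z) (y - z) \<ge> 0)"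
    using minty_solution_cball[OF r] by metis
  then obtain Y where Y: "\<And>n. Y n \<in> cball 0 (r n)"
    "\<And>n z. z \<in> cball 0 (r n) \<Longrightarrow> inner (w - F z) (Y n - z) \<ge> 0"
    by metis
  have "\<forall>n. Y n \<in> cball 0 1" using Y(1) r by (meson less_imp_le mem_cball_0 order.trans)
  then obtain \<zeta> \<sigma> where \<zeta>: "\<zeta> \<in> cball 0 1" "strict_mono \<sigma>" "(Y \<circ> \<sigma>) \<longlonglongrightarrow> \<zeta>"
    using seq_compactE[OF compact_imp_seq_compact[OF compact_cball]] by metis
  have "inner (w - F z) (\<zeta> - z) \<ge> 0" if z: "z \<in> ball 0 1" for z
  proof (rule tendsto_lowerbound)
    show "(\<lambda>n. inner (w - F z) (Y (\<sigma> n) - z)) \<longlonglongrightarrow> inner (w - F z) (\<zeta> - z)"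
      using \<zeta>(3) unfolding o_def by (intro tendsto_intros)
    have "(r \<circ> \<sigma>) \<longlonglongrightarrow> 1" using LIMSEQ_subseq_LIMSEQ[OF \<open>r \<longlonglongrightarrow> 1\<close> \<zeta>(2)] .
    then have "\<forall>\<^sub>F n in sequentially. norm z < r (\<sigma> n)"
      using z unfolding o_def by (intro order_tendstoD) auto
    then show "\<forall>\<^sub>F n in sequentially. 0 \<le> inner (w - F z) (Y (\<sigma> n) - z)"
      by eventually_elim (use Y(2) in auto)
  qed simp
  then have "w \<in> monotone_values F \<zeta>" unfolding monotone_values_def by blast
  with \<zeta>(1) show thesis by (rule that)
qed

lemma mem_monotone_values_sphereE:
  assumes "w \<notin> F ` ball 0 1"
  obtains \<zeta> where "cmod \<zeta> = 1" "w \<in> monotone_values F \<zeta>"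
proof -
  obtain \<zeta> where \<zeta>: "\<zeta> \<in> cball 0 1" "w \<in> monotone_values F \<zeta>"
    by (rule mem_monotone_values_cballE)
  have "\<zeta> \<notin> ball 0 1"
    using monotone_values_interior[OF cont _ \<zeta>(2)] assms by blast
  with \<zeta> show thesis using that by simp
qed

lemma Compl_image_eq_Union_boundary_rays: "- (F ` ball 0 1) = \<Union> (boundary_rays F)"
  unfolding boundary_rays_def
proof (intro equalityI subsetI)
  fix w assume "w \<in> - (F ` ball 0 1)"
  then obtain \<zeta> where "cmod \<zeta> = 1" "w \<in> monotone_values F \<zeta>"
    using mem_monotone_values_sphereE by blast
  with start_mem_ray[of w \<zeta>]
  show "w \<in> \<Union> {ray v \<zeta> | v \<zeta>. cmod \<zeta> = 1 \<and> v \<in> monotone_values F \<zeta>}" by blast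
next
  fix x assume "x \<in> \<Union> {ray v \<zeta> | v \<zeta>. cmod \<zeta> = 1 \<and> v \<in> monotone_values F \<zeta>}"
  then obtain v \<zeta> where "cmod \<zeta> = 1" "v \<in> monotone_values F \<zeta>" "x \<in> ray v \<zeta>" by blast
  then have "x \<in> monotone_values F \<zeta>" using ray_subset_monotone_values by blast
  then show "x \<in> - (F ` ball 0 1)"
    using monotone_values_boundary_disjoint_image[OF mono \<open>cmod \<zeta> = 1\<close>] by blast
qed

lemma non_crossing_rays:
  assumes "cmod \<zeta>\<^sub>1 = 1" "v\<^sub>1 \<in> monotone_values F \<zeta>\<^sub>1" "cmod \<zeta>\<^sub>2 = 1" "v\<^sub>2 \<in> monotone_values F \<zeta>\<^sub>2"
  shows "non_crossing (ray v\<^sub>1 \<zeta>\<^sub>1) (ray v\<^sub>2 \<zeta>\<^sub>2)"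
proof -
  have "ray v\<^sub>1 \<zeta>\<^sub>1 \<subseteq> ray v\<^sub>2 \<zeta>\<^sub>2 \<or> ray v\<^sub>2 \<zeta>\<^sub>2 \<subseteq> ray v\<^sub>1 \<zeta>\<^sub>1 \<or> ray v\<^sub>1 \<zeta>\<^sub>1 \<inter> ray v\<^sub>2 \<zeta>\<^sub>2 = {}"
  proof (cases "\<zeta>\<^sub>1 = \<zeta>\<^sub>2")
    case True
    then show ?thesis using rays_nested_or_disjoint by blast
  next
    case False
    then have "monotone_values F \<zeta>\<^sub>1 \<inter> monotone_values F \<zeta>\<^sub>2 = {}"
      using monotone_values_boundary_disjoint assms(1,3) by blast
    then show ?thesis using ray_subset_monotone_values assms by blast
  qed
  then show ?thesis unfolding non_crossing_def by blast
qed

lemma non_crossing_boundary_rays: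
  "h\<^sub>1 \<in> boundary_rays F \<Longrightarrow> h\<^sub>2 \<in> boundary_rays F \<Longrightarrow> non_crossing h\<^sub>1 h\<^sub>2"
  unfolding boundary_rays_def using non_crossing_rays by blast

theorem close_to_convex_if_strictly_monotone: "close_to_convex F"
proof -
  have inj: "inj_on F (ball 0 1)" using mono by (rule strictly_monotone_on_imp_inj_on)
  have "open (F ` ball 0 1)" using invariance_of_domain[OF cont open_ball inj] .
  moreover have "connected (F ` ball 0 1)"
    using connected_continuous_image[OF cont connected_ball] .
  moreover have "simply_connected (F ` ball 0 1)"
  proof -
    obtain g where "homeomorphism (ball 0 1) (F ` ball 0 1) F g"
      using invariance_of_domain_homeomorphism[OF open_ball cont _ inj] by auto
    then have "ball (0::complex) 1 homeomorphic F ` ball 0 1" unfolding homeomorphic_def by blast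
    then show ?thesis
      using homeomorphic_simply_connected_eq convex_imp_simply_connected[OF convex_ball] by blast
  qed
  moreover have "\<exists>H. (\<forall>h\<in>H. half_line h) \<and> - (F ` ball 0 1) = \<Union>H \<and>
      (\<forall>h\<^sub>1\<in>H. \<forall>h\<^sub>2\<in>H. h\<^sub>1 \<noteq> h\<^sub>2 \<longrightarrow> non_crossing h\<^sub>1 h\<^sub>2)"
    using half_line_if_boundary_ray Compl_image_eq_Union_boundary_rays non_crossing_boundary_rays
    by (intro exI[of _ "boundary_rays F"]) blast
  ultimately show ?thesis
    unfolding close_to_convex_def close_to_convex_domain_def using inj by blast
qed

end

lemma class_R_Re_deriv_pos:
  assumes "0 \<le> lam" "lam < gam" "gam \<le> del" and R: "class_R gam del lam F"
    and z: "z \<in> ball 0 1"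
  shows "Re (deriv F z) > 0"
proof -
  define p where "p = deriv F"
  define G where "G w = p w + w * deriv p w" for w
  have "F holomorphic_on ball 0 1" using R unfolding class_R_def class_A_def by blast
  then have hol_p: "p holomorphic_on ball 0 1" and hol_p': "deriv p holomorphic_on ball 0 1"
    unfolding p_def by (auto intro: holomorphic_deriv)
  then have hol_G: "G holomorphic_on ball 0 1"
    unfolding G_def by (auto intro!: holomorphic_intros)
  have deriv_G: "deriv G w = 2 * deriv p w + w * deriv (deriv p) w" if "w \<in> ball 0 1" for w
    unfolding G_def using that hol_p hol_p'
    by (intro DERIV_imp_deriv) (auto intro!: derivative_eq_intros holomorphic_derivI)
  have "Re (of_real gam * G w + of_real ((del - gam) / 2) * w * deriv G w) > 0" if "w \<in> ball 0 1" for w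
  proof -
    have "of_real gam * G w + of_real ((del - gam) / 2) * w * deriv G w
        = of_real gam * p w + of_real del * w * (deriv ^^ 2) F w
          + of_real ((del - gam) / 2) * w\<^sup>2 * (deriv ^^ 3) F w"
      unfolding deriv_G[OF that] G_def p_def
      by (simp add: numeral_2_eq_2 numeral_3_eq_3 power2_eq_square field_simps)
    then show ?thesis using R that \<open>0 \<le> lam\<close> unfolding class_R_def p_def by fastforce
  qed
  then have "Re (G w) > 0" if "w \<in> ball 0 1" for w
    using assms that hol_G by (intro Re_pos_if_Re_Euler_combination_pos[of G gam "(del - gam) / 2"]) auto
  then have "Re (of_real 1 * p w + of_real 1 * w * deriv p w) > 0" if "w \<in> ball 0 1" for w
    using that unfolding G_def by simp
  from Re_pos_if_Re_Euler_combination_pos[OF hol_p zero_less_one zero_le_one this z]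
  show ?thesis unfolding p_def .
qed

theorem lemma4:
  fixes gam del lam :: real and F :: "complex \<Rightarrow> complex"
  assumes "0 \<le> lam" "lam < gam" "gam \<le> del"
    and "class_R gam del lam F"
  shows "(\<forall>z\<in>ball 0 1. Re (deriv F z) > 0) \<and> close_to_convex F"
proof
  show pos: "\<forall>z\<in>ball 0 1. Re (deriv F z) > 0"
    using class_R_Re_deriv_pos[OF assms] by blast
  have hol: "F holomorphic_on ball 0 1"
    using assms(4) unfolding class_R_def class_A_def by blast
  show "close_to_convex F"
  proof (rule close_to_convex_if_strictly_monotone)
    show "continuous_on (ball 0 1) F" using hol by (rule holomorphic_on_imp_continuous_on)
    show "strictly_monotone_on (ball 0 1) F"
      using hol pos by (intro strictly_monotone_on_if_Re_deriv_pos) auto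
  qed
qed

end
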